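(* Let $A\in\mathbb{R}^{n\times n}$ and $\alpha>0$ be given, and consider the linear system $\dot x=Ax$, $x\in\mathbb{R}^n$. The system is stable if there exists a symmetric positive definite matrix $P\in\mathbb{R}^{n\times n}$ such that at least one of the following conditions holds: 1) for some $\beta\ge1$ with either $\beta=1$, or $\beta>1$ and $\mathrm{trace}(A)\le0$: $A^{\rm T}P+PA-\frac{1}{\alpha}\frac{\beta-1}{\beta+1}\mathrm{trace}(A)P<0$; 2) $A^{\rm T}P+PA-\frac{1}{\alpha}\mathrm{trace}(A)P<0$ and $A^{\rm T}P+PA+\frac{1}{\alpha}\mathrm{trace}(A)P<0$.
   Context: Matrix inequalities $M<0$ mean that the symmetric matrix $M$ is negative definite. Stability is in the sense of Lyapunov. *)

theory Defs
  imports "HOL-Analysis.Analysis"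
begin

definition symmetric_mat :: "real^'n^'n \<Rightarrow> bool" where
  "symmetric_mat M \<longleftrightarrow> transpose M = M"

definition pos_def :: "real^'n^'n \<Rightarrow> bool" where
  "pos_def M \<longleftrightarrow> symmetric_mat M \<and> (\<forall>x. x \<noteq> 0 \<longrightarrow> x \<bullet> (M *v x) > 0)"

definition neg_def :: "real^'n^'n \<Rightarrow> bool" where
  "neg_def M \<longleftrightarrow> symmetric_mat M \<and> (\<forall>x. x \<noteq> 0 \<longrightarrow> x \<bullet> (M *v x) < 0)"

definition lyapunov_stable :: "real^'n^'n \<Rightarrow> bool" where
  "lyapunov_stable A \<longleftrightarrow>
     (\<forall>\<epsilon>>0. \<exists>\<delta>>0. \<forall>x :: real \<Rightarrow> real^'n.
        (\<forall>t\<ge>0. (x has_vector_derivative (A *v x t)) (at t within {0..})) \<and> norm (x 0) < \<delta>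
        \<longrightarrow> (\<forall>t\<ge>0. norm (x t) < \<epsilon>))"

end

theory Submission
  imports Defs
begin

text \<open>Both conditions force the Lyapunov matrix \<open>A\<^sup>T P + P A\<close> to be negative semidefinite:
  in condition 1 the shift coefficient is \<open>c \<le> 0\<close>, so \<open>A\<^sup>T P + P A \<le> A\<^sup>T P + P A - c P < 0\<close>;
  in condition 2 \<open>A\<^sup>T P + P A\<close> is the average of two negative definite matrices. Then
  \<open>V y = y\<^sup>T P y\<close> is nonincreasing along solutions and comparable to \<open>\<parallel>y\<parallel>\<^sup>2\<close> from above and
  below, which is Lyapunov stability.\<close>

lemma quadratic_form_shift:
  fixes Q P :: "real^'n^'n"
  shows "y \<bullet> ((Q - c *\<^sub>R P) *v y) = y \<bullet> (Q *v y) - c * (y \<bullet> (P *v y))"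
  by (simp add: matrix_vector_mult_diff_rdistrib inner_diff_right
      scaleR_matrix_vector_assoc[symmetric])

lemma pos_def_quadratic_form_nonneg:
  assumes "pos_def P"
  shows "0 \<le> y \<bullet> (P *v y)"
  using assms unfolding pos_def_def by (cases "y = 0") (auto intro: less_imp_le)

lemma neg_semidef_if_neg_def_shift:
  assumes "pos_def P" and "neg_def (Q - c *\<^sub>R P)" and "c \<le> 0"
  shows "y \<bullet> (Q *v y) \<le> 0"
proof (cases "y = 0")
  case False
  then have "y \<bullet> (Q *v y) - c * (y \<bullet> (P *v y)) < 0"
    using assms(2) unfolding neg_def_def quadratic_form_shift by blast
  moreover have "c * (y \<bullet> (P *v y)) \<le> 0"
    using assms(3) pos_def_quadratic_form_nonneg[OF assms(1)] by (rule mult_nonpos_nonneg)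
  ultimately show ?thesis by linarith
qed simp

lemma neg_semidef_if_neg_def_scaled_shift:
  fixes Q P :: "real^'n^'n"
  assumes "\<alpha> > 0" and "pos_def P" and "\<beta> = 1 \<or> (\<beta> > 1 \<and> t \<le> 0)"
    and "neg_def (Q - ((1 / \<alpha>) * ((\<beta> - 1) / (\<beta> + 1)) * t) *\<^sub>R P)"
  shows "y \<bullet> (Q *v y) \<le> 0"
proof (rule neg_semidef_if_neg_def_shift[OF assms(2,4)])
  show "(1 / \<alpha>) * ((\<beta> - 1) / (\<beta> + 1)) * t \<le> 0"
    using assms(3)
  proof
    assume "\<beta> > 1 \<and> t \<le> 0"
    then show ?thesis using \<open>\<alpha> > 0\<close> by (intro mult_nonneg_nonpos) auto
  qed simp
qed

lemma neg_semidef_if_neg_def_plus_minus: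
  fixes Q M :: "real^'n^'n"
  assumes "neg_def (Q - M)" and "neg_def (Q + M)"
  shows "y \<bullet> (Q *v y) \<le> 0"
proof (cases "y = 0")
  case False
  then have "y \<bullet> (Q *v y) - y \<bullet> (M *v y) < 0" and "y \<bullet> (Q *v y) + y \<bullet> (M *v y) < 0"
    using assms unfolding neg_def_def
    by (simp_all add: matrix_vector_mult_diff_rdistrib matrix_vector_mult_add_rdistrib
        inner_diff_right inner_add_right)
  then show ?thesis by linarith
qed simp

lemma quadratic_form_le_norm_square:
  fixes P :: "real^'n^'n"
  obtains K where "K > 0" and "\<And>y. y \<bullet> (P *v y) \<le> K * (norm y)\<^sup>2"
proof -
  obtain K where K: "K > 0" "\<And>y. norm (P *v y) \<le> norm y * K"
    using bounded_linear.pos_bounded[OF matrix_vector_mul_bounded_linear[of P]] by blast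
  have "y \<bullet> (P *v y) \<le> K * (norm y)\<^sup>2" for y
  proof -
    have "y \<bullet> (P *v y) \<le> norm y * norm (P *v y)" by (rule norm_cauchy_schwarz)
    also have "\<dots> \<le> norm y * (norm y * K)" using K(2) by (simp add: mult_left_mono)
    finally show ?thesis by (simp add: power2_eq_square algebra_simps)
  qed
  with K(1) show thesis by (rule that)
qed

lemma pos_def_quadratic_form_ge_norm_square:
  fixes P :: "real^'n^'n"
  assumes "pos_def P"
  obtains m where "m > 0" and "\<And>y. m * (norm y)\<^sup>2 \<le> y \<bullet> (P *v y)"
proof -
  have "continuous_on (sphere (0::real^'n) 1) (\<lambda>y. y \<bullet> (P *v y))"
    by (intro continuous_intros)
  then obtain z where z: "z \<in> sphere (0::real^'n) 1"
    and z_min: "\<And>u. u \<in> sphere 0 1 \<Longrightarrow> z \<bullet> (P *v z) \<le> u \<bullet> (P *v u)"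
    using continuous_attains_inf[OF compact_sphere _ \<open>continuous_on _ _\<close>] by auto
  have "z \<noteq> 0" using z by auto
  then have "z \<bullet> (P *v z) > 0"
    using assms unfolding pos_def_def by blast
  moreover have "z \<bullet> (P *v z) * (norm y)\<^sup>2 \<le> y \<bullet> (P *v y)" for y
  proof (cases "y = 0")
    case False
    define u where "u = (1 / norm y) *\<^sub>R y"
    have "u \<in> sphere 0 1" using False by (simp add: u_def)
    have "y = norm y *\<^sub>R u" using False by (simp add: u_def)
    then have "y \<bullet> (P *v y) = (norm y)\<^sup>2 * (u \<bullet> (P *v u))"
      by (metis inner_scaleR_left inner_scaleR_right matrix_vector_mult_scaleR power2_eq_square mult.assoc)
    also have "\<dots> \<ge> (norm y)\<^sup>2 * (z \<bullet> (P *v z))"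
      using z_min[OF \<open>u \<in> sphere 0 1\<close>] by (simp add: mult_left_mono)
    finally show ?thesis by (simp add: mult.commute)
  qed simp
  ultimately show thesis by (rule that)
qed

lemma lyapunov_derivative:
  fixes A P :: "real^'n^'n"
  shows "(A *v y) \<bullet> (P *v y) + y \<bullet> (P *v (A *v y)) = y \<bullet> ((transpose A ** P + P ** A) *v y)"
proof -
  have "(A *v y) \<bullet> (P *v y) = y \<bullet> ((transpose A ** P) *v y)"
    by (metis dot_lmul_matrix vector_transpose_matrix matrix_vector_mul_assoc)
  moreover have "y \<bullet> (P *v (A *v y)) = y \<bullet> ((P ** A) *v y)"
    by (simp add: matrix_vector_mul_assoc)
  ultimately show ?thesis
    by (simp add: matrix_vector_mult_add_rdistrib inner_add_right)
qed

lemma quadratic_form_nonincreasing_along_solution: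
  fixes A P :: "real^'n^'n" and x :: "real \<Rightarrow> real^'n"
  assumes neg: "\<And>y. y \<bullet> ((transpose A ** P + P ** A) *v y) \<le> 0"
    and sol: "\<forall>t\<ge>0. (x has_vector_derivative (A *v x t)) (at t within {0..})"
    and "0 \<le> t"
  shows "x t \<bullet> (P *v x t) \<le> x 0 \<bullet> (P *v x 0)"
proof -
  have "((\<lambda>s. x s \<bullet> (P *v x s)) has_derivative
      (\<lambda>h. x s \<bullet> (P *v (h *\<^sub>R (A *v x s))) + (h *\<^sub>R (A *v x s)) \<bullet> (P *v x s))) (at s within {0..t})"
    if "0 \<le> s" "s \<le> t" for s
  proof -
    have x_deriv: "(x has_derivative (\<lambda>h. h *\<^sub>R (A *v x s))) (at s within {0..t})"
      using sol that has_derivative_subset[of x _ s "{0..}" "{0..t}"]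
      unfolding has_vector_derivative_def by auto
    show ?thesis
      using has_derivative_inner[OF x_deriv
          bounded_linear.has_derivative[OF matrix_vector_mul_bounded_linear[of P] x_deriv]] .
  qed
  from mvt_very_simple[OF \<open>0 \<le> t\<close> this] obtain s where
    "x t \<bullet> (P *v x t) - x 0 \<bullet> (P *v x 0) =
      x s \<bullet> (P *v ((t - 0) *\<^sub>R (A *v x s))) + ((t - 0) *\<^sub>R (A *v x s)) \<bullet> (P *v x s)"
    by blast
  also have "\<dots> = t * ((A *v x s) \<bullet> (P *v x s) + x s \<bullet> (P *v (A *v x s)))"
    by (simp add: matrix_vector_mult_scaleR algebra_simps)
  also have "\<dots> = t * (x s \<bullet> ((transpose A ** P + P ** A) *v x s))"
    by (simp only: lyapunov_derivative)
  also have "\<dots> \<le> 0"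
    using \<open>0 \<le> t\<close> neg by (simp add: mult_nonneg_nonpos)
  finally show ?thesis by simp
qed

lemma lyapunov_stable_if_neg_semidef:
  fixes A P :: "real^'n^'n"
  assumes "pos_def P"
    and neg: "\<And>y. y \<bullet> ((transpose A ** P + P ** A) *v y) \<le> 0"
  shows "lyapunov_stable A"
  unfolding lyapunov_stable_def
proof (intro allI impI)
  fix \<epsilon> :: real
  assume "\<epsilon> > 0"
  obtain m where "m > 0" and lower: "\<And>y. m * (norm y)\<^sup>2 \<le> y \<bullet> (P *v y)"
    using pos_def_quadratic_form_ge_norm_square[OF assms(1)] by blast
  obtain K where "K > 0" and upper: "\<And>y. y \<bullet> (P *v y) \<le> K * (norm y)\<^sup>2"
    using quadratic_form_le_norm_square by blast
  define \<delta> where "\<delta> = \<epsilon> * sqrt (m / K)"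
  have "\<delta> > 0" using \<open>\<epsilon> > 0\<close> \<open>m > 0\<close> \<open>K > 0\<close> by (simp add: \<delta>_def)
  have K_\<delta>: "K * \<delta>\<^sup>2 = m * \<epsilon>\<^sup>2"
    using \<open>m > 0\<close> \<open>K > 0\<close> by (simp add: \<delta>_def power_mult_distrib)
  show "\<exists>\<delta>>0. \<forall>x :: real \<Rightarrow> real^'n.
      (\<forall>t\<ge>0. (x has_vector_derivative (A *v x t)) (at t within {0..})) \<and> norm (x 0) < \<delta>
      \<longrightarrow> (\<forall>t\<ge>0. norm (x t) < \<epsilon>)"
  proof (intro exI[of _ \<delta>] conjI allI impI \<open>\<delta> > 0\<close>)
    fix x :: "real \<Rightarrow> real^'n" and t :: real
    assume x: "(\<forall>t\<ge>0. (x has_vector_derivative (A *v x t)) (at t within {0..})) \<and> norm (x 0) < \<delta>"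
      and "0 \<le> t"
    have "m * (norm (x t))\<^sup>2 \<le> x t \<bullet> (P *v x t)" by (rule lower)
    also have "\<dots> \<le> x 0 \<bullet> (P *v x 0)"
      using quadratic_form_nonincreasing_along_solution[OF neg _ \<open>0 \<le> t\<close>] x by blast
    also have "\<dots> \<le> K * (norm (x 0))\<^sup>2" by (rule upper)
    also have "\<dots> < K * \<delta>\<^sup>2"
      using x \<open>K > 0\<close> by (intro mult_strict_left_mono power_strict_mono) auto
    finally have "(norm (x t))\<^sup>2 < \<epsilon>\<^sup>2"
      using \<open>m > 0\<close> K_\<delta> by simp
    then show "norm (x t) < \<epsilon>"
      using \<open>\<epsilon> > 0\<close> by (simp add: power_less_imp_less_base)
  qed
qed

theorem theorem2p4:
  fixes A :: "real^'n^'n" and \<alpha> :: real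
  assumes "\<alpha> > 0"
    and "\<exists>P. pos_def P \<and>
          ((\<exists>\<beta>::real. \<beta> \<ge> 1 \<and> (\<beta> = 1 \<or> (\<beta> > 1 \<and> trace A \<le> 0)) \<and>
              neg_def (transpose A ** P + P ** A
                       - ((1 / \<alpha>) * ((\<beta> - 1) / (\<beta> + 1)) * trace A) *\<^sub>R P))
           \<or> (neg_def (transpose A ** P + P ** A - ((1 / \<alpha>) * trace A) *\<^sub>R P) \<and>
              neg_def (transpose A ** P + P ** A + ((1 / \<alpha>) * trace A) *\<^sub>R P)))"
  shows "lyapunov_stable A"
proof -
  from assms(2) obtain P where "pos_def P"
    and "\<And>y. y \<bullet> ((transpose A ** P + P ** A) *v y) \<le> 0"
    using neg_semidef_if_neg_def_scaled_shift[OF \<open>\<alpha> > 0\<close>] neg_semidef_if_neg_def_plus_minus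
    by blast
  then show ?thesis by (rule lyapunov_stable_if_neg_semidef)
qed

end
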